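(* Let $\mathcal{D}=\{(\mathbf{x}_1,y_1),\ldots,(\mathbf{x}_n,y_n)\}$, $\mathbf{x}_i\in\mathbb{R}^d$, $1\le m<n$, $\mathcal{D}_m=\{(\mathbf{x}_{n-m+1},y_{n-m+1}),\ldots,(\mathbf{x}_n,y_n)\}$. Let $\ell$ be a convex loss, differentiable everywhere, twice differentiable in its first argument, and $\lambda>0$. For a dataset $S$ let $L(\mathbf{w};S)=\sum_{(\mathbf{x},y)\in S}\ell(\mathbf{w}^\top\mathbf{x},y)+\frac{\lambda|S|}{2}\|\mathbf{w}\|_2^2$. Let $\mathbf{w}^*=\arg\min L(\cdot;\mathcal{D})$, $$\Delta^{(m)}=m\lambda\mathbf{w}^*+\sum_{j=n-m+1}^n\nabla\ell((\mathbf{w}^* )^\top\mathbf{x}_j,y_j),\quad H^{(m)}_{\mathbf{w}^*}=\nabla^2L(\mathbf{w}^*;\mathcal{D}\setminus\mathcal{D}_m),\quad \mathbf{w}^{(-m)}=\mathbf{w}^*+\big[H^{(m)}_{\mathbf{w}^*}\big]^{-1}\Delta^{(m)}.$$ Suppose that $\|\nabla\ell(\mathbf{w}^\top\mathbf{x}_i,y_i)\|_2\le C$ for all $(\mathbf{x}_i,y_i)\in\mathcal{D}$ and $\mathbf{w}\in\mathbb{R}^d$, that $\ell''$ is $\gamma$-Lipschitz, and that $\|\mathbf{x}_i\|_2\le1$ for all $i$. Then $$\|\nabla L(\mathbf{w}^{(-m)};\mathcal{D}\setminus\mathcal{D}_m)\|_2\le\gamma(n-m)\Big\|\big[H^{(m)}_{\mathbf{w}^*}\big]^{-1}\Delta^{(m)}\Big\|_2^2\le\frac{4\gamma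 m^2C^2}{\lambda^2(n-m)}.$$
   Context: Gradients/Hessians are with respect to $\mathbf{w}$; $\ell''$ is the second derivative of $\ell$ in its first argument. *)

theory Defs
  imports "HOL-Analysis.Analysis"
begin

definition gradient :: "(real^'d \<Rightarrow> real) \<Rightarrow> real^'d \<Rightarrow> real^'d" where
  "gradient f w = (THE g. (f has_derivative (\<lambda>h. g \<bullet> h)) (at w))"

definition hessian :: "(real^'d \<Rightarrow> real) \<Rightarrow> real^'d \<Rightarrow> real^'d^'d" where
  "hessian f w = (THE H. ((gradient f) has_derivative (\<lambda>h. H *v h)) (at w))"

definition regloss :: "(real \<Rightarrow> real \<Rightarrow> real) \<Rightarrow> real \<Rightarrow> (nat \<Rightarrow> real^'d) \<Rightarrow> (nat \<Rightarrow> real)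
    \<Rightarrow> nat set \<Rightarrow> real^'d \<Rightarrow> real" where
  "regloss l lam x y S w = (\<Sum>i\<in>S. l (w \<bullet> x i) (y i)) + lam * real (card S) / 2 * (norm w)^2"

end

theory Submission
  imports Defs
begin

(* Convexity makes l'' nonnegative, so the Hessian is
   bounded below by lam |S| and in particular invertible.  Optimality of w* on the whole data
   set gives grad L(w*; S) = -Delta for the retained indices S, so w^(-m) is exactly one Newton
   step for L(.; S) from w*.  The gradient after a Newton step v is a sum of first-order Taylor
   remainders of l', each at most gam (v.x_i)^2 <= gam ||v||^2 because l'' is gam-Lipschitz.
   For the second inequality, optimality also gives lam ||w*|| <= C, hence ||Delta|| <= 2 m C,
   while the lower bound on the Hessian gives lam (n - m) ||v|| <= ||Delta||. *)

lemma gradient_eqI: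
  fixes f :: "real^'d \<Rightarrow> real"
  assumes "(f has_derivative (\<lambda>h. g \<bullet> h)) (at w)"
  shows "gradient f w = g"
  unfolding gradient_def
proof (rule the_equality)
  fix g' assume "(f has_derivative (\<lambda>h. g' \<bullet> h)) (at w)"
  then have "(\<lambda>h. g' \<bullet> h) = (\<lambda>h. g \<bullet> h)"
    using assms has_derivative_unique by blast
  then have "(g' - g) \<bullet> (g' - g) = 0"
    by (metis inner_diff_left diff_self)
  then show "g' = g" by simp
qed (fact assms)

lemma hessian_eqI:
  fixes f :: "real^'d \<Rightarrow> real"
  assumes "(gradient f has_derivative (\<lambda>h. H *v h)) (at w)"
  shows "hessian f w = H"
  unfolding hessian_def
proof (rule the_equality)
  fix H' assume "(gradient f has_derivative (\<lambda>h. H' *v h)) (at w)"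
  then have "(\<lambda>h. H' *v h) = (\<lambda>h. H *v h)"
    using assms has_derivative_unique by blast
  then show "H' = H" by (metis matrix_eq)
qed (fact assms)

lemma has_gradient_eq_0_at_minimum:
  fixes f :: "'a::real_inner \<Rightarrow> real"
  assumes "(f has_derivative (\<lambda>h. g \<bullet> h)) (at w)" and "\<And>v. f w \<le> f v"
  shows "g = 0"
proof -
  have "(\<lambda>h. g \<bullet> h) = (\<lambda>h. 0)"
    using differential_zero_maxmin[of w UNIV, OF _ _ assms(1)] assms(2) by auto
  then have "g \<bullet> g = 0" by metis
  then show ?thesis by simp
qed

lemma has_derivative_compose_inner:
  fixes x :: "'a::real_inner"
  assumes "(f has_real_derivative f') (at (w \<bullet> x))"
  shows "((\<lambda>v. f (v \<bullet> x)) has_derivative (\<lambda>h. f' * (h \<bullet> x))) (at w)"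
  using has_derivative_compose[of "\<lambda>v. v \<bullet> x" "\<lambda>h. h \<bullet> x" w UNIV f "\<lambda>h. f' * h"] assms
  by (simp add: has_field_derivative_def bounded_linear.has_derivative[OF bounded_linear_inner_left])

lemma convex_on_deriv_mono:
  assumes "convex_on UNIV f" and "\<And>a. (f has_real_derivative f' a) (at a)"
  shows "mono f'"
proof
  fix a b :: real assume "a \<le> b"
  have "f' a * (b - a) \<le> f b - f a" and "f' b * (a - b) \<le> f a - f b"
    by (rule convex_on_imp_above_tangent[OF assms(1)]; simp add: assms(2))+
  then have "0 \<le> (f' b - f' a) * (b - a)" by (simp add: algebra_simps)
  with \<open>a \<le> b\<close> show "f' a \<le> f' b"
    by (cases "a = b") (auto simp: zero_le_mult_iff)
qed

lemma convex_on_second_deriv_nonneg: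
  assumes "convex_on UNIV f" and "\<And>a. (f has_real_derivative f' a) (at a)"
    and "(f' has_real_derivative f'') (at a)"
  shows "f'' \<ge> 0"
  using mono_on_imp_deriv_nonneg[of UNIV f' f'' a] convex_on_deriv_mono[OF assms(1,2)] assms(3)
  by simp

lemma lipschitz_deriv_taylor_bound:
  assumes "\<And>t. (f has_real_derivative f' t) (at t)"
    and "\<And>s t. \<bar>f' s - f' t\<bar> \<le> L * \<bar>s - t\<bar>"
  shows "\<bar>f b - f a - f' a * (b - a)\<bar> \<le> L * (b - a)\<^sup>2"
proof -
  let ?g = "\<lambda>t. f t - f' a * t"
  have "norm (?g b - ?g a) \<le> (L * \<bar>b - a\<bar>) * norm (b - a)"
  proof (rule field_differentiable_bound[OF convex_closed_segment])
    show "(?g has_real_derivative f' z - f' a) (at z within closed_segment a b)" for z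
    proof (rule has_field_derivative_at_within)
      show "(?g has_real_derivative f' z - f' a) (at z)"
        by (auto intro!: derivative_eq_intros assms(1))
    qed
    show "norm (f' z - f' a) \<le> L * \<bar>b - a\<bar>" if "z \<in> closed_segment a b" for z
    proof -
      have "\<bar>z - a\<bar> \<le> \<bar>b - a\<bar>"
        using that by (auto simp: closed_segment_eq_real_ivl split: if_splits)
      moreover have "L \<ge> 0"
        using assms(2)[of 1 0] by simp
      ultimately show ?thesis
        using assms(2)[of z a] mult_left_mono[of "\<bar>z - a\<bar>" "\<bar>b - a\<bar>" L] by simp
    qed
  qed auto
  moreover have "?g b - ?g a = f b - f a - f' a * (b - a)"
    by (simp add: algebra_simps)
  ultimately show ?thesis
    by (simp add: power2_eq_square mult.assoc)
qed

lemma norm_le_if_inner_ge: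
  fixes h :: "'a::real_inner"
  assumes "c * (h \<bullet> h) \<le> h \<bullet> u"
  shows "c * norm h \<le> norm u"
proof (cases "h = 0")
  case False
  have "norm h * (c * norm h) \<le> norm h * norm u"
    using assms norm_cauchy_schwarz[of h u]
    by (simp add: power2_norm_eq_inner[symmetric] power2_eq_square mult_ac)
  with False show ?thesis by simp
qed simp

lemma invertible_if_bounded_below:
  fixes A :: "real^'n^'n"
  assumes "c > 0" and "\<And>h. c * norm h \<le> norm (A *v h)"
  shows "invertible A"
proof -
  have "h = 0" if "A *v h = 0" for h
    using assms(2)[of h] that \<open>c > 0\<close> by (simp add: mult_le_0_iff)
  then show ?thesis
    using matrix_left_invertible_ker invertible_left_inverse by blast
qed

lemma matrix_inv_right:
  fixes A :: "'a::field^'n^'n"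
  assumes "invertible A"
  shows "A ** matrix_inv A = mat 1"
  using assms unfolding invertible_def matrix_inv_def by (rule someI2_ex) simp

locale twice_differentiable_loss =
  fixes l l1 l2 :: "real \<Rightarrow> real \<Rightarrow> real"
  assumes l_deriv: "\<And>a b. ((\<lambda>t. l t b) has_real_derivative l1 a b) (at a)"
    and l1_deriv: "\<And>a b. ((\<lambda>t. l1 t b) has_real_derivative l2 a b) (at a)"
begin

lemma has_derivative_loss_term:
  "((\<lambda>v. l (v \<bullet> x i) (y i)) has_derivative (\<lambda>h. (l1 (w \<bullet> x i) (y i) *\<^sub>R x i) \<bullet> h)) (at w)"
proof -
  have "((\<lambda>v. l (v \<bullet> x i) (y i)) has_derivative (\<lambda>h. l1 (w \<bullet> x i) (y i) * (h \<bullet> x i))) (at w)"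
    by (rule has_derivative_compose_inner[OF l_deriv])
  then show ?thesis
    by (simp add: inner_commute)
qed

lemma has_derivative_loss_deriv_term:
  "((\<lambda>v. l1 (v \<bullet> x i) (y i)) has_derivative (\<lambda>h. l2 (w \<bullet> x i) (y i) * (h \<bullet> x i))) (at w)"
  by (rule has_derivative_compose_inner[OF l1_deriv])

lemma gradient_loss_term:
  "gradient (\<lambda>v. l (v \<bullet> x i) (y i)) w = l1 (w \<bullet> x i) (y i) *\<^sub>R x i"
  by (rule gradient_eqI has_derivative_loss_term)+

lemma has_derivative_regloss:
  assumes "finite S"
  shows "(regloss l lam x y S has_derivative
      (\<lambda>h. ((\<Sum>i\<in>S. l1 (w \<bullet> x i) (y i) *\<^sub>R x i) + (lam * card S) *\<^sub>R w) \<bullet> h)) (at w)"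
proof -
  have "regloss l lam x y S = (\<lambda>w. (\<Sum>i\<in>S. l (w \<bullet> x i) (y i)) + lam * card S / 2 * (w \<bullet> w))"
    by (simp add: fun_eq_iff regloss_def power2_norm_eq_inner)
  then show ?thesis
    by (auto intro!: derivative_eq_intros has_derivative_loss_term
        simp: inner_sum_right inner_commute algebra_simps)
qed

lemma gradient_regloss:
  assumes "finite S"
  shows "gradient (regloss l lam x y S) w = (\<Sum>i\<in>S. l1 (w \<bullet> x i) (y i) *\<^sub>R x i) + (lam * card S) *\<^sub>R w"
  by (rule gradient_eqI has_derivative_regloss assms)+

lemma gradient_regloss_eq_sum:
  assumes "finite S"
  shows "gradient (regloss l lam x y S) w
    = (lam * card S) *\<^sub>R w + (\<Sum>i\<in>S. gradient (\<lambda>v. l (v \<bullet> x i) (y i)) w)"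
  by (simp add: gradient_regloss[OF assms] gradient_loss_term)

lemma gradient_regloss_Un:
  assumes "finite S" "finite T" "S \<inter> T = {}"
  shows "gradient (regloss l lam x y (S \<union> T)) w
    = gradient (regloss l lam x y S) w + gradient (regloss l lam x y T) w"
  using assms by (simp add: gradient_regloss sum.union_disjoint card_Un_disjoint algebra_simps)

lemma hessian_regloss_mult:
  assumes "finite S"
  shows "hessian (regloss l lam x y S) w *v h
    = (\<Sum>i\<in>S. (l2 (w \<bullet> x i) (y i) * (h \<bullet> x i)) *\<^sub>R x i) + (lam * card S) *\<^sub>R h"
proof -
  define D where "D h = (\<Sum>i\<in>S. (l2 (w \<bullet> x i) (y i) * (h \<bullet> x i)) *\<^sub>R x i) + (lam * card S) *\<^sub>R h"
    for h
  have "(gradient (regloss l lam x y S) has_derivative D) (at w)"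
    unfolding gradient_regloss[OF assms, abs_def] D_def
    by (intro has_derivative_add has_derivative_sum has_derivative_scaleR_left
        has_derivative_scaleR_right has_derivative_loss_deriv_term has_derivative_ident)
  moreover from this have "linear D"
    by (rule has_derivative_linear)
  ultimately have "hessian (regloss l lam x y S) w = matrix D"
    by (intro hessian_eqI) (simp add: matrix_works)
  with \<open>linear D\<close> show ?thesis
    by (simp add: matrix_works D_def)
qed

lemma hessian_regloss_coercive:
  fixes lam :: real
  assumes "finite S" and l2_nonneg: "\<And>a b. l2 a b \<ge> 0"
  shows "lam * card S * norm h \<le> norm (hessian (regloss l lam x y S) w *v h)"
proof (rule norm_le_if_inner_ge)
  have "h \<bullet> (hessian (regloss l lam x y S) w *v h)
      = (\<Sum>i\<in>S. l2 (w \<bullet> x i) (y i) * (h \<bullet> x i)\<^sup>2) + lam * card S * (h \<bullet> h)"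
    by (simp add: hessian_regloss_mult[OF assms(1)] inner_sum_right power2_eq_square algebra_simps)
  also have "\<dots> \<ge> lam * card S * (h \<bullet> h)"
    by (simp add: sum_nonneg l2_nonneg)
  finally show "lam * card S * (h \<bullet> h) \<le> h \<bullet> (hessian (regloss l lam x y S) w *v h)" .
qed

lemma gradient_regloss_linearization:
  assumes "finite S" and x_bd: "\<And>i. i \<in> S \<Longrightarrow> norm (x i) \<le> 1"
    and lip: "\<And>a a' b. \<bar>l2 a b - l2 a' b\<bar> \<le> gam * \<bar>a - a'\<bar>"
  shows "norm (gradient (regloss l lam x y S) (w + v) - gradient (regloss l lam x y S) w
      - hessian (regloss l lam x y S) w *v v) \<le> gam * card S * (norm v)\<^sup>2"
proof -
  define r where "r i = l1 ((w + v) \<bullet> x i) (y i) - l1 (w \<bullet> x i) (y i)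
      - l2 (w \<bullet> x i) (y i) * ((w + v) \<bullet> x i - w \<bullet> x i)" for i
  have gam_nonneg: "gam \<ge> 0"
    using lip[where a = 1 and a' = 0 and b = 0] by simp
  have "gradient (regloss l lam x y S) (w + v) - gradient (regloss l lam x y S) w
      - hessian (regloss l lam x y S) w *v v = (\<Sum>i\<in>S. r i *\<^sub>R x i)"
    by (simp add: gradient_regloss hessian_regloss_mult assms(1) r_def sum_subtractf[symmetric]
        algebra_simps)
  also have "norm \<dots> \<le> (\<Sum>i\<in>S. gam * (norm v)\<^sup>2)"
  proof (rule sum_norm_le)
    fix i assume "i \<in> S"
    then have x_i: "norm (x i) \<le> 1"
      by (rule x_bd)
    have "\<bar>r i\<bar> \<le> gam * (v \<bullet> x i)\<^sup>2"
      using lipschitz_deriv_taylor_bound[OF l1_deriv lip, where a = "w \<bullet> x i" and b = "(w + v) \<bullet> x i"]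
      by (simp add: r_def inner_add_left)
    also have "\<dots> \<le> gam * (norm v)\<^sup>2"
    proof -
      have "\<bar>v \<bullet> x i\<bar> \<le> norm v"
        using Cauchy_Schwarz_ineq2[of v "x i"] x_i mult_left_le[of "norm (x i)" "norm v"] by simp
      then have "(v \<bullet> x i)\<^sup>2 \<le> (norm v)\<^sup>2"
        by (metis abs_le_square_iff abs_norm_cancel)
      with gam_nonneg show ?thesis
        by (rule mult_left_mono[rotated])
    qed
    finally show "norm (r i *\<^sub>R x i) \<le> gam * (norm v)\<^sup>2"
      using x_i mult_left_le[of "norm (x i)" "\<bar>r i\<bar>"] by (simp add: order_trans)
  qed
  finally show ?thesis
    by (simp add: mult_ac)
qed

lemma regloss_newton_step:
  fixes x :: "nat \<Rightarrow> real^'d" and y :: "nat \<Rightarrow> real" and lam :: real and S w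
  assumes "finite S" and pos: "lam * card S > 0" and l2_nonneg: "\<And>a b. l2 a b \<ge> 0"
    and x_bd: "\<And>i. i \<in> S \<Longrightarrow> norm (x i) \<le> 1"
    and lip: "\<And>a a' b. \<bar>l2 a b - l2 a' b\<bar> \<le> gam * \<bar>a - a'\<bar>"
  defines "H \<equiv> hessian (regloss l lam x y S) w"
  defines "v \<equiv> matrix_inv H *v (- gradient (regloss l lam x y S) w)"
  shows "norm (gradient (regloss l lam x y S) (w + v)) \<le> gam * card S * (norm v)\<^sup>2"
    and "lam * card S * norm v \<le> norm (gradient (regloss l lam x y S) w)"
proof -
  have coercive: "lam * card S * norm h \<le> norm (H *v h)" for h
    unfolding H_def by (rule hessian_regloss_coercive[OF assms(1) l2_nonneg])
  then have "H ** matrix_inv H = mat 1"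
    using pos by (intro matrix_inv_right invertible_if_bounded_below)
  then have Hv: "H *v v = - gradient (regloss l lam x y S) w"
    by (simp add: v_def matrix_vector_mul_assoc)
  show "norm (gradient (regloss l lam x y S) (w + v)) \<le> gam * card S * (norm v)\<^sup>2"
    using gradient_regloss_linearization[where x = x and y = y and lam = lam and w = w and v = v,
        OF assms(1) x_bd lip] by (simp add: Hv[unfolded H_def])
  show "lam * card S * norm v \<le> norm (gradient (regloss l lam x y S) w)"
    using coercive[of v] by (simp add: Hv)
qed

lemma gradient_regloss_eq_0_at_minimum:
  assumes "finite S" and "\<And>v. regloss l lam x y S w \<le> regloss l lam x y S v"
  shows "gradient (regloss l lam x y S) w = 0"
  using has_gradient_eq_0_at_minimum[OF has_derivative_regloss[OF assms(1)] assms(2)]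
  by (simp add: gradient_regloss[OF assms(1)])

lemma norm_sum_gradient_loss_le:
  fixes C :: real
  assumes "\<And>i. i \<in> S \<Longrightarrow> norm (gradient (\<lambda>v. l (v \<bullet> x i) (y i)) w) \<le> C"
  shows "norm (\<Sum>i\<in>S. gradient (\<lambda>v. l (v \<bullet> x i) (y i)) w) \<le> card S * C"
  using sum_norm_le[of S _ "\<lambda>_. C", OF assms] by simp

lemma norm_gradient_regloss_le:
  fixes lam C :: real
  assumes "finite S" and "lam \<ge> 0"
    and "\<And>i. i \<in> S \<Longrightarrow> norm (gradient (\<lambda>v. l (v \<bullet> x i) (y i)) w) \<le> C"
  shows "norm (gradient (regloss l lam x y S) w) \<le> card S * (lam * norm w + C)"
proof -
  have "norm (gradient (regloss l lam x y S) w)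
      \<le> norm ((lam * card S) *\<^sub>R w) + norm (\<Sum>i\<in>S. gradient (\<lambda>v. l (v \<bullet> x i) (y i)) w)"
    unfolding gradient_regloss_eq_sum[OF assms(1)] by (rule norm_triangle_ineq)
  also have "\<dots> \<le> lam * card S * norm w + card S * C"
    using assms(2) norm_sum_gradient_loss_le[OF assms(3)] by simp
  finally show ?thesis
    by (simp add: algebra_simps)
qed

lemma regloss_minimizer_norm_le:
  fixes lam C :: real
  assumes "finite S" and "S \<noteq> {}" and "lam \<ge> 0"
    and "gradient (regloss l lam x y S) w = 0"
    and "\<And>i. i \<in> S \<Longrightarrow> norm (gradient (\<lambda>v. l (v \<bullet> x i) (y i)) w) \<le> C"
  shows "lam * norm w \<le> C"
proof -
  have "(lam * card S) *\<^sub>R w = - (\<Sum>i\<in>S. gradient (\<lambda>v. l (v \<bullet> x i) (y i)) w)"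
    using assms(4) by (simp add: gradient_regloss_eq_sum[OF assms(1)] eq_neg_iff_add_eq_0)
  then have "norm ((lam * card S) *\<^sub>R w) = norm (\<Sum>i\<in>S. gradient (\<lambda>v. l (v \<bullet> x i) (y i)) w)"
    by simp
  then have "card S * (lam * norm w) = norm (\<Sum>i\<in>S. gradient (\<lambda>v. l (v \<bullet> x i) (y i)) w)"
    using assms(3) by (simp add: abs_mult mult_ac)
  also have "\<dots> \<le> card S * C"
    by (rule norm_sum_gradient_loss_le[OF assms(5)])
  finally show ?thesis
    using assms(1,2) by (simp add: card_gt_0_iff)
qed

lemma gradient_regloss_split_at_minimum:
  assumes "finite S" and "finite T" and "S \<inter> T = {}"
    and "\<And>v. regloss l lam x y (S \<union> T) w \<le> regloss l lam x y (S \<union> T) v"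
  shows "gradient (regloss l lam x y S) w = - gradient (regloss l lam x y T) w"
proof -
  have "gradient (regloss l lam x y (S \<union> T)) w = 0"
    using assms(1,2) by (intro gradient_regloss_eq_0_at_minimum assms(4)) simp
  then show ?thesis
    by (simp add: gradient_regloss_Un[OF assms(1-3)] eq_neg_iff_add_eq_0)
qed

lemma norm_gradient_regloss_at_minimum_le:
  fixes lam C :: real
  assumes "finite U" and "T \<subseteq> U" and "U \<noteq> {}" and "lam \<ge> 0"
    and "\<And>v. regloss l lam x y U w \<le> regloss l lam x y U v"
    and grad_bd: "\<And>i. i \<in> U \<Longrightarrow> norm (gradient (\<lambda>v. l (v \<bullet> x i) (y i)) w) \<le> C"
  shows "norm (gradient (regloss l lam x y T) w) \<le> 2 * card T * C"
proof -
  have "lam * norm w \<le> C"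
    by (rule regloss_minimizer_norm_le[OF assms(1,3,4) gradient_regloss_eq_0_at_minimum[OF assms(1,5)]
        grad_bd])
  have "finite T"
    using assms(2,1) by (rule finite_subset)
  have "norm (gradient (regloss l lam x y T) w) \<le> card T * (lam * norm w + C)"
    by (rule norm_gradient_regloss_le[OF \<open>finite T\<close> assms(4) grad_bd]) (use assms(2) in blast)
  also have "\<dots> \<le> card T * (C + C)"
    using \<open>lam * norm w \<le> C\<close> by (intro mult_left_mono) auto
  finally show ?thesis
    by (simp add: algebra_simps)
qed

end

lemma scaled_square_le:
  fixes gam c k r B :: real
  assumes "gam \<ge> 0" and "c > 0" and "k > 0" and "r \<ge> 0" and "c * k * r \<le> B"
  shows "gam * k * r\<^sup>2 \<le> gam * B\<^sup>2 / (c\<^sup>2 * k)"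
proof -
  have "(c * k * r)\<^sup>2 \<le> B\<^sup>2"
    using assms by (intro power_mono) auto
  then have "gam * (c * k * r)\<^sup>2 / (c\<^sup>2 * k) \<le> gam * B\<^sup>2 / (c\<^sup>2 * k)"
    using assms by (intro divide_right_mono mult_left_mono) auto
  moreover have "gam * (c * k * r)\<^sup>2 / (c\<^sup>2 * k) = gam * k * r\<^sup>2"
    using assms by (simp add: power2_eq_square field_simps)
  ultimately show ?thesis
    by simp
qed

theorem theorem4:
  fixes l :: "real \<Rightarrow> real \<Rightarrow> real"
    and l1 l2 :: "real \<Rightarrow> real \<Rightarrow> real"
    and x :: "nat \<Rightarrow> real^'d" and y :: "nat \<Rightarrow> real"
    and n m :: nat and lam gam C :: real and wstar :: "real^'d"
  assumes m_pos: "1 \<le> m" and m_lt: "m < n"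
    and convex: "\<And>b. convex_on UNIV (\<lambda>a. l a b)"
    and diff: "\<And>p. (\<lambda>q. l (fst q) (snd q)) differentiable (at p)"
    and d1: "\<And>a b. ((\<lambda>t. l t b) has_real_derivative l1 a b) (at a)"
    and d2: "\<And>a b. ((\<lambda>t. l1 t b) has_real_derivative l2 a b) (at a)"
    and lam_pos: "lam > 0"
    and wstar_min: "\<And>w. regloss l lam x y {1..n} wstar \<le> regloss l lam x y {1..n} w"
    and grad_bd: "\<And>i w. i \<in> {1..n} \<Longrightarrow> norm (gradient (\<lambda>v. l (v \<bullet> x i) (y i)) w) \<le> C"
    and lip: "\<And>a a' b. \<bar>l2 a b - l2 a' b\<bar> \<le> gam * \<bar>a - a'\<bar>"
    and x_bd: "\<And>i. i \<in> {1..n} \<Longrightarrow> norm (x i) \<le> 1"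
  shows "let Delta = (real m * lam) *\<^sub>R wstar
                   + (\<Sum>j\<in>{n-m+1..n}. gradient (\<lambda>v. l (v \<bullet> x j) (y j)) wstar);
             H = hessian (regloss l lam x y {1..n-m}) wstar;
             wm = wstar + matrix_inv H *v Delta
         in norm (gradient (regloss l lam x y {1..n-m}) wm)
              \<le> gam * real (n - m) * (norm (matrix_inv H *v Delta))^2
          \<and> gam * real (n - m) * (norm (matrix_inv H *v Delta))^2
              \<le> 4 * gam * (real m)^2 * C^2 / (lam^2 * real (n - m))"
proof -
  interpret twice_differentiable_loss l l1 l2
    using d1 d2 by unfold_locales
  define S T where "S = {1..n-m}" and "T = {n-m+1..n}"
  let ?L = "regloss l lam x y"
  define Delta where "Delta = (real m * lam) *\<^sub>R wstar
    + (\<Sum>j\<in>{n-m+1..n}. gradient (\<lambda>v. l (v \<bullet> x j) (y j)) wstar)"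
  define v where "v = matrix_inv (hessian (?L S) wstar) *v Delta"
  have ST: "finite S" "finite T" "S \<inter> T = {}" "{1..n} = S \<union> T" "card S = n - m" "card T = m"
    using m_lt by (auto simp: S_def T_def)
  have x_bd_S: "\<And>i. i \<in> S \<Longrightarrow> norm (x i) \<le> 1"
    using x_bd by (auto simp: S_def)
  have l2_nonneg: "\<And>a b. l2 a b \<ge> 0"
    by (rule convex_on_second_deriv_nonneg[OF convex d1 d2])
  have Delta_eq: "Delta = gradient (?L T) wstar"
    using m_lt by (simp add: Delta_def T_def gradient_regloss_eq_sum)
  have "gradient (?L S) wstar = - Delta"
    unfolding Delta_eq by (rule gradient_regloss_split_at_minimum[OF ST(1-3) wstar_min[unfolded ST(4)]])
  then have newton: "norm (gradient (?L S) (wstar + v)) \<le> gam * real (n - m) * (norm v)\<^sup>2"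
      "lam * real (n - m) * norm v \<le> norm Delta"
    using regloss_newton_step[where x = x and y = y and lam = lam and S = S and w = wstar,
        OF ST(1) _ l2_nonneg x_bd_S lip] m_lt lam_pos
    by (simp_all add: v_def ST(5))
  have "norm Delta \<le> 2 * real m * C"
    using norm_gradient_regloss_at_minimum_le[where T = T, OF _ _ _ _ wstar_min grad_bd] lam_pos m_lt
    by (simp add: Delta_eq ST(6) T_def)
  then have "gam * real (n - m) * (norm v)\<^sup>2 \<le> gam * (2 * real m * C)\<^sup>2 / (lam\<^sup>2 * real (n - m))"
    using newton(2) lip[where a = 1 and a' = 0 and b = 0] lam_pos m_lt by (intro scaled_square_le) auto
  then show ?thesis
    unfolding Let_def Delta_def[symmetric] S_def[symmetric] v_def[symmetric]
    using newton(1) by (simp add: power_mult_distrib mult_ac)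
qed

end
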